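(* Let $t$ be the Thue-Morse word. For every $n\geq 1$, we have $PPL_t(n)=PPL^0_t(4n)\geq PPL_t(4n)$.
   Context: The Thue-Morse word $t=t[1]t[2]\cdots$ is the fixed point starting with $a$ of the morphism $\tau: a\mapsto abba,\ b\mapsto baab$. For $0\le i\le j$, $t(i..j]$ denotes the factor $t[i+1]\cdots t[j]$. A palindrome is a word $p=p[1]\cdots p[n]$ with $p[i]=p[n-i+1]$ for all $i$. $PPL_t(n)$ is the minimal number of nonempty palindromes whose concatenation equals the prefix $t(0..n]$. A decomposition $t(0..4n]=t(e_0..e_1]t(e_1..e_2]\cdots t(e_{k-1}..e_k]$ with $0=e_0<e_1<\cdots<e_k=4n$ into palindromes is called a $0$-decomposition if every $e_i$ is divisible by $4$; $PPL^0_t(4n)$ is the minimal number of palindromes in a $0$-decomposition of $t(0..4n]$. *)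

theory Defs
  imports Main
begin

datatype letter = A | B

fun tau :: "letter \<Rightarrow> letter list" where
  "tau A = [A, B, B, A]"
| "tau B = [B, A, A, B]"

text \<open>The fixed point of tau starting with a, 0-indexed: position n (0-based) of the word
  is letter (n mod 4) of tau applied to the letter at position (n div 4). So tm0 k = t[k+1].\<close>
function tm0 :: "nat \<Rightarrow> letter" where
  "tm0 n = (if n = 0 then A else tau (tm0 (n div 4)) ! (n mod 4))"
  by auto
termination
  by (relation "measure id") auto

definition t :: "nat \<Rightarrow> letter" where
  "t i = tm0 (i - 1)"

text \<open>The factor t(i..j] = t[i+1] ... t[j].\<close>
definition factor :: "nat \<Rightarrow> nat \<Rightarrow> letter list" where
  "factor i j = map t [Suc i..<Suc j]"

definition palindrome :: "'a list \<Rightarrow> bool" where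
  "palindrome p \<longleftrightarrow> (\<forall>i\<in>{1..length p}. p ! (i - 1) = p ! (length p - i))"

definition pal_decomp :: "nat \<Rightarrow> nat \<Rightarrow> (nat \<Rightarrow> nat) \<Rightarrow> bool" where
  "pal_decomp m k e \<longleftrightarrow> e 0 = 0 \<and> e k = m \<and> (\<forall>i<k. e i < e (Suc i)) \<and>
     (\<forall>i<k. palindrome (factor (e i) (e (Suc i))))"

definition PPL :: "nat \<Rightarrow> nat" where
  "PPL m = (LEAST k. \<exists>e. pal_decomp m k e)"

text \<open>0-decompositions: all cut points divisible by 4. PPL0 m is meant for m = 4n.\<close>
definition PPL0 :: "nat \<Rightarrow> nat" where
  "PPL0 m = (LEAST k. \<exists>e. pal_decomp m k e \<and> (\<forall>i\<le>k. 4 dvd e i))"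

end

theory Submission
  imports Defs
begin

text \<open>Since t is the fixed point of the 4-uniform morphism tau, the factor t(4i..4j] is the image
  under tau of t(i..j]. The images tau a = abba and tau b = baab are distinct palindromes of equal
  length, so a word is a palindrome if and only if its image under tau is one. Dividing all cut
  points by 4 is therefore a bijection between the 0-decompositions of t(0..4n] and the
  decompositions of t(0..n] that preserves the number of pieces, which gives
  PPL0 (4n) = PPL n; and PPL (4n) \<le> PPL0 (4n) because 0-decompositions are decompositions.\<close>

lemma palindrome_iff_rev_eq: "palindrome p \<longleftrightarrow> rev p = p"
proof
  assume pal: "palindrome p"
  show "rev p = p"
  proof (rule nth_equalityI)
    fix k assume k: "k < length (rev p)"
    then have "Suc k \<in> {1..length p}" by auto
    with pal have "p ! k = p ! (length p - Suc k)" unfolding palindrome_def by fastforce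
    then show "rev p ! k = p ! k" using k by (simp add: rev_nth)
  qed simp
next
  assume "rev p = p"
  then show "palindrome p"
    unfolding palindrome_def by (metis atLeastAtMost_iff diff_Suc_1 length_rev less_eq_Suc_le
        not0_implies_Suc not_one_le_zero rev_nth)
qed

lemma concat_map_uniform_inj:
  assumes uniform: "\<And>x y. length (f x) = length (f y)" and "inj f"
    and "concat (map f u) = concat (map f v)" and "length u = length v"
  shows "u = v"
  using assms(3,4)
proof (induction u arbitrary: v)
  case Nil
  then show ?case by simp
next
  case (Cons x u)
  then obtain y v' where v: "v = y # v'" by (cases v) auto
  with Cons.prems have "f x @ concat (map f u) = f y @ concat (map f v')" by simp
  then have "f x = f y" and tails: "concat (map f u) = concat (map f v')"
    using uniform by (simp_all add: append_eq_append_conv)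
  from \<open>inj f\<close> \<open>f x = f y\<close> have "x = y" by (rule injD)
  with Cons.IH[OF tails] Cons.prems v show ?case by simp
qed

lemma palindrome_concat_map_iff:
  assumes "\<And>x y. length (f x) = length (f y)" and "inj f" and "\<And>x. palindrome (f x)"
  shows "palindrome (concat (map f w)) \<longleftrightarrow> palindrome w"
proof -
  have "rev (concat (map f w)) = concat (map f (rev w))"
    using assms(3) by (simp add: rev_concat rev_map comp_def palindrome_iff_rev_eq)
  then show ?thesis
    unfolding palindrome_iff_rev_eq using concat_map_uniform_inj[OF assms(1,2), of "rev w" w]
    by auto
qed

lemma palindrome_concat_map_tau_iff: "palindrome (concat (map tau w)) \<longleftrightarrow> palindrome w"
proof (rule palindrome_concat_map_iff)
  show "length (tau x) = length (tau y)" for x y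
    by (cases x; cases y) simp_all
  show "inj tau"
    by (rule injI) (metis letter.exhaust list.inject tau.simps)
  show "palindrome (tau x)" for x
    by (cases x) (simp_all add: palindrome_iff_rev_eq)
qed

lemma tm0_block: "r < 4 \<Longrightarrow> tm0 (4 * j + r) = tau (tm0 j) ! r"
  by (subst tm0.simps) auto

lemma factor_append: "i \<le> j \<Longrightarrow> j \<le> k \<Longrightarrow> factor i k = factor i j @ factor j k"
  unfolding factor_def using upt_add_eq_append[of "Suc i" "Suc j" "k - j"] by simp

lemma factor_block: "factor (4 * j) (4 * Suc j) = tau (t (Suc j))"
proof -
  have "[Suc (4 * j)..<Suc (4 * Suc j)] = map (\<lambda>r. Suc (4 * j + r)) [0..<4]"
    by (simp add: upt_rec)
  then have "factor (4 * j) (4 * Suc j) = map (\<lambda>r. tau (tm0 j) ! r) [0..<4]"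
    unfolding factor_def by (simp add: t_def tm0_block del: tm0.simps)
  also have "\<dots> = tau (tm0 j)"
    by (cases "tm0 j") (simp_all add: upt_rec)
  also have "\<dots> = tau (t (Suc j))"
    by (simp add: t_def)
  finally show ?thesis .
qed

lemma factor_mult_4: "i \<le> j \<Longrightarrow> factor (4 * i) (4 * j) = concat (map tau (factor i j))"
proof (induction j rule: dec_induct)
  case base
  then show ?case by (simp add: factor_def)
next
  case (step j)
  have "factor (4 * i) (4 * Suc j) = factor (4 * i) (4 * j) @ factor (4 * j) (4 * Suc j)"
    using step.hyps by (simp add: factor_append)
  also have "\<dots> = concat (map tau (factor i j @ [t (Suc j)]))"
    using factor_block[of j] by (simp add: step.IH)
  also have "factor i j @ [t (Suc j)] = factor i (Suc j)"
    using step.hyps by (simp add: factor_def)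
  finally show ?case .
qed

lemma palindrome_factor_mult_4_iff:
  "i \<le> j \<Longrightarrow> palindrome (factor (4 * i) (4 * j)) \<longleftrightarrow> palindrome (factor i j)"
  by (simp add: factor_mult_4 palindrome_concat_map_tau_iff)

lemma pal_decomp_mult_4:
  "pal_decomp n k e \<Longrightarrow> pal_decomp (4 * n) k (\<lambda>i. 4 * e i)"
  unfolding pal_decomp_def by (simp add: palindrome_factor_mult_4_iff less_imp_le)

lemma pal_decomp_div_4:
  assumes "pal_decomp (4 * n) k e" and "\<forall>i\<le>k. 4 dvd e i"
  shows "pal_decomp n k (\<lambda>i. e i div 4)"
proof -
  define e' where "e' = (\<lambda>i. e i div 4)"
  have e: "e i = 4 * e' i" if "i \<le> k" for i
    using assms(2) that by (auto simp: e'_def)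
  have "pal_decomp (4 * n) k (\<lambda>i. 4 * e' i)"
    using assms(1) unfolding pal_decomp_def by (simp add: e)
  then have "pal_decomp n k e'"
    unfolding pal_decomp_def
  proof (elim conjE, intro conjI allI impI)
    fix i assume "\<forall>i<k. 4 * e' i < 4 * e' (Suc i)" and "i < k"
    then show less: "e' i < e' (Suc i)" by simp
    assume "\<forall>i<k. palindrome (factor (4 * e' i) (4 * e' (Suc i)))"
    with \<open>i < k\<close> have "palindrome (factor (4 * e' i) (4 * e' (Suc i)))" by blast
    with less show "palindrome (factor (e' i) (e' (Suc i)))"
      by (simp add: palindrome_factor_mult_4_iff)
  qed simp_all
  then show ?thesis by (simp only: e'_def)
qed

lemma ex_zero_decomp_iff:
  "(\<exists>e. pal_decomp (4 * n) k e \<and> (\<forall>i\<le>k. 4 dvd e i)) \<longleftrightarrow> (\<exists>e. pal_decomp n k e)"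
  using pal_decomp_div_4 pal_decomp_mult_4 by fastforce

lemma PPL0_mult_4: "PPL0 (4 * n) = PPL n"
  unfolding PPL0_def PPL_def ex_zero_decomp_iff ..

lemma pal_decomp_letters: "pal_decomp m m id"
  unfolding pal_decomp_def factor_def palindrome_def by auto

lemma PPL_le_PPL0_mult_4: "PPL (4 * n) \<le> PPL0 (4 * n)"
proof -
  have "\<exists>e. pal_decomp n (PPL n) e"
    unfolding PPL_def by (rule LeastI_ex) (blast intro: pal_decomp_letters)
  then obtain e where "pal_decomp (4 * n) (PPL n) e"
    using pal_decomp_mult_4 by blast
  then have "PPL (4 * n) \<le> PPL n"
    unfolding PPL_def by (blast intro: Least_le)
  then show ?thesis by (simp add: PPL0_mult_4)
qed

theorem proposition7:
  fixes n :: nat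
  assumes "n \<ge> 1"
  shows "PPL n = PPL0 (4 * n) \<and> PPL0 (4 * n) \<ge> PPL (4 * n)"
  using PPL0_mult_4 PPL_le_PPL0_mult_4 by simp

end
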